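(* Let $\alpha\in(0,1)$ and consider the continued fraction algorithm on $\mathbb{R}^2$ with lattice $\mathbb{Z}^2$, fundamental domain $K=(-0.5,0.5]\times(-\alpha,1-\alpha]$, and inversion $\iota(x,y)=(x,-y)/(x^2+y^2)$. If $\alpha$ is not a root of a quadratic polynomial over $\mathbb{Z}$, then the system is not serendipitous, and the finite range property fails.
   Context: $[w]$ denotes the unique point of $\mathbb{Z}^2$ with $w-[w]\in K$; $T:K\to K$ is $Tx=\iota x-[\iota x]$ for $x\ne0$, $T0=0$. Cylinders: $C_\emptyset=K$, $C_{as}=K\cap\iota(C_s+a)$ for $a\in\mathbb{Z}^2$. Finite range property: finitely many positive-measure sets $U_1,\dots,U_J\subset K$ such that every nonempty cylinder satisfies $T^{|s|}C_s=U_j$ up to a null set for some $j$. Let $E_0=\partial K$, $E_{i+1}=E_i\cup TE_i$, $E=\bigcup_iE_i$; the system is serendipitous if $E=E_n$ for some $n$ and $K\setminus E$ has finitely many connected components. *)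

theory Defs
  imports "HOL-Analysis.Analysis"
begin

type_synonym pt = "real \<times> real"

definition latt :: "int \<times> int \<Rightarrow> pt" where
  "latt z = (real_of_int (fst z), real_of_int (snd z))"

definition Kdom :: "real \<Rightarrow> pt set" where
  "Kdom \<alpha> = {(x, y). -1/2 < x \<and> x \<le> 1/2 \<and> -\<alpha> < y \<and> y \<le> 1 - \<alpha>}"

definition iota :: "pt \<Rightarrow> pt" where
  "iota p = (fst p / ((fst p)\<^sup>2 + (snd p)\<^sup>2), - snd p / ((fst p)\<^sup>2 + (snd p)\<^sup>2))"

definition nearest :: "real \<Rightarrow> pt \<Rightarrow> int \<times> int" where
  "nearest \<alpha> w = (THE z. w - latt z \<in> Kdom \<alpha>)"

definition Tmap :: "real \<Rightarrow> pt \<Rightarrow> pt" where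
  "Tmap \<alpha> x = (if x = 0 then 0 else iota x - latt (nearest \<alpha> (iota x)))"

text \<open>Cylinders indexed by finite sequences of lattice points; iota is applied
  on the punctured plane (it is undefined at 0).\<close>
fun cyl :: "real \<Rightarrow> (int \<times> int) list \<Rightarrow> pt set" where
  "cyl \<alpha> [] = Kdom \<alpha>"
| "cyl \<alpha> (a # s) = Kdom \<alpha> \<inter> iota ` (((\<lambda>p. p + latt a) ` cyl \<alpha> s) - {0})"

definition finite_range :: "real \<Rightarrow> bool" where
  "finite_range \<alpha> \<longleftrightarrow>
     (\<exists>\<U> :: pt set set. finite \<U> \<and>
        (\<forall>U\<in>\<U>. U \<subseteq> Kdom \<alpha> \<and> U \<in> sets lebesgue \<and> emeasure lebesgue U > 0) \<and>
        (\<forall>s. cyl \<alpha> s \<noteq> {} \<longrightarrow>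
           (\<exists>U\<in>\<U>. let V = (Tmap \<alpha> ^^ length s) ` cyl \<alpha> s in
                     (V - U) \<union> (U - V) \<in> null_sets lebesgue)))"

fun Eset :: "real \<Rightarrow> nat \<Rightarrow> pt set" where
  "Eset \<alpha> 0 = frontier (Kdom \<alpha>)"
| "Eset \<alpha> (Suc i) = Eset \<alpha> i \<union> Tmap \<alpha> ` Eset \<alpha> i"

definition Eall :: "real \<Rightarrow> pt set" where
  "Eall \<alpha> = (\<Union>i. Eset \<alpha> i)"

definition serendipitous :: "real \<Rightarrow> bool" where
  "serendipitous \<alpha> \<longleftrightarrow>
     (\<exists>n. Eall \<alpha> = Eset \<alpha> n) \<and> finite (components (Kdom \<alpha> - Eall \<alpha>))"

end

(*
  The point (0, 1 - alpha) on the top edge of K has its T-orbit on the y-axis, driven by the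
  one-dimensional map y -> -1/y - ceil(-1/y - (1 - alpha)).  Its points are quotients of
  consecutive members of a sequence in Z + Z(1 - alpha), and since alpha is not quadratic they are
  pairwise distinct.  Let V k be the image under T^k of the cylinder followed by this orbit for k
  steps.  Near the k-th orbit point, a composition of translations and inversions carries V k onto
  K near (0, 1 - alpha); so V k lies on one side of an arc of a generalized circle through that
  point, namely the pull-back of the top edge of K.  The frontier of a single V l lies on finitely
  many generalized circles, and these cannot contain the arcs of infinitely many V k: such a circle
  would pass through infinitely many orbit points, hence be the y-axis, whereas integrality of the
  pulled back circles and the irrationality of alpha show that none of them is the y-axis.  Hence
  among infinitely many V k two differ on a nonempty open set.  Finite range would make infinitely
  many V k agree up to null sets; serendipity would make infinitely many of them agree outside the
  null set E, because the frontier of V k lies in E and so V k - E is a union of components of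
  K - E.
*)

theory Submission
  imports Defs
begin

section \<open>The map \<open>T\<close> and its cylinders\<close>

lemma sum_squares_iota:
  "(fst (iota p))\<^sup>2 + (snd (iota p))\<^sup>2 = 1 / ((fst p)\<^sup>2 + (snd p)\<^sup>2)"
  by (simp add: iota_def power_divide power2_eq_square add_divide_distrib[symmetric])

lemma iota_iota [simp]: "iota (iota p) = p"
proof (cases "(fst p)\<^sup>2 + (snd p)\<^sup>2 = 0")
  case True
  then show ?thesis by (simp add: iota_def prod_eq_iff)
next
  case False
  define r where "r = (fst p)\<^sup>2 + (snd p)\<^sup>2"
  have "iota (iota p) = (fst (iota p) * r, - snd (iota p) * r)"
    unfolding iota_def [of "iota p"] by (simp add: sum_squares_iota r_def)
  then show ?thesis
    using False by (simp add: iota_def r_def prod_eq_iff)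
qed

lemma iota_zero [simp]: "iota 0 = 0"
  by (simp add: iota_def zero_prod_def)

lemma iota_eq_0_iff [simp]: "iota p = 0 \<longleftrightarrow> p = 0"
  by (metis iota_iota iota_zero)

lemma mem_Kdom: "p \<in> Kdom \<alpha> \<longleftrightarrow> -1/2 < fst p \<and> fst p \<le> 1/2 \<and> -\<alpha> < snd p \<and> snd p \<le> 1 - \<alpha>"
  by (cases p) (simp add: Kdom_def)

lemma Kdom_Times: "Kdom \<alpha> = {-1/2<..1/2} \<times> {-\<alpha><..1 - \<alpha>}"
  by (auto simp: mem_Kdom)

lemma closure_Kdom: "closure (Kdom \<alpha>) = {-1/2..1/2} \<times> {-\<alpha>..1 - \<alpha>}"
  by (simp add: Kdom_Times closure_Times)

lemma interior_Kdom: "interior (Kdom \<alpha>) = {-1/2<..<1/2} \<times> {-\<alpha><..<1 - \<alpha>}"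
  by (simp add: Kdom_Times interior_Times)

lemma latt_components [simp]: "fst (latt z) = of_int (fst z)" "snd (latt z) = of_int (snd z)"
  by (simp_all add: latt_def)

lemma ex1_nearest: "\<exists>!z. w - latt z \<in> Kdom \<alpha>"
proof
  let ?z = "(\<lceil>fst w - 1/2\<rceil>, \<lceil>snd w - (1 - \<alpha>)\<rceil>)"
  show "w - latt ?z \<in> Kdom \<alpha>"
    by (simp add: mem_Kdom) linarith
next
  fix z assume z: "w - latt z \<in> Kdom \<alpha>"
  show "z = (\<lceil>fst w - 1/2\<rceil>, \<lceil>snd w - (1 - \<alpha>)\<rceil>)"
  proof (cases z)
    case (Pair a b)
    with z have "fst w - 1/2 \<le> a" "a < fst w - 1/2 + 1"
      and "snd w - (1 - \<alpha>) \<le> b" "b < snd w - (1 - \<alpha>) + 1"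
      by (auto simp: mem_Kdom)
    then show ?thesis using Pair by (auto intro!: ceiling_unique [symmetric])
  qed
qed

lemma nearest_in_Kdom: "w - latt (nearest \<alpha> w) \<in> Kdom \<alpha>"
  unfolding nearest_def by (rule theI' [OF ex1_nearest])

lemma nearest_eq: "w - latt z \<in> Kdom \<alpha> \<Longrightarrow> nearest \<alpha> w = z"
  unfolding nearest_def by (rule the1_equality [OF ex1_nearest])

lemma Tmap_eq: "x \<noteq> 0 \<Longrightarrow> iota x - latt z \<in> Kdom \<alpha> \<Longrightarrow> Tmap \<alpha> x = iota x - latt z"
  by (simp add: Tmap_def nearest_eq)

lemma Tmap_in_Kdom: "0 < \<alpha> \<Longrightarrow> \<alpha> \<le> 1 \<Longrightarrow> Tmap \<alpha> x \<in> Kdom \<alpha>"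
  using nearest_in_Kdom [of "iota x" \<alpha>] by (auto simp: Tmap_def mem_Kdom)

lemma mem_cyl_Cons:
  "x \<in> cyl \<alpha> (a # s) \<longleftrightarrow> x \<in> Kdom \<alpha> \<and> x \<noteq> 0 \<and> iota x - latt a \<in> cyl \<alpha> s"
proof
  assume "x \<in> cyl \<alpha> (a # s)"
  then have "x \<in> Kdom \<alpha>" "x \<in> iota ` ((\<lambda>p. p + latt a) ` cyl \<alpha> s - {0})"
    by simp_all
  then obtain p where "x \<in> Kdom \<alpha>" "p \<in> cyl \<alpha> s" "p + latt a \<noteq> 0" "x = iota (p + latt a)"
    by blast
  then show "x \<in> Kdom \<alpha> \<and> x \<noteq> 0 \<and> iota x - latt a \<in> cyl \<alpha> s"
    by simp
next
  assume x: "x \<in> Kdom \<alpha> \<and> x \<noteq> 0 \<and> iota x - latt a \<in> cyl \<alpha> s"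
  then have "x \<in> iota ` ((\<lambda>p. p + latt a) ` cyl \<alpha> s - {0})"
    by (intro rev_image_eqI [of "iota x"]) (auto intro: rev_image_eqI [of "iota x - latt a"])
  then show "x \<in> cyl \<alpha> (a # s)"
    using x by simp
qed

lemma cyl_subset_Kdom: "cyl \<alpha> s \<subseteq> Kdom \<alpha>"
  by (cases s) auto

declare cyl.simps(2) [simp del]

lemma Tmap_cyl_Cons: "x \<in> cyl \<alpha> (a # s) \<Longrightarrow> Tmap \<alpha> x = iota x - latt a"
  using cyl_subset_Kdom [of \<alpha> s] by (intro Tmap_eq) (auto simp: mem_cyl_Cons)

lemma cyl_snoc: "cyl \<alpha> (s @ [a]) = {x \<in> cyl \<alpha> s. (Tmap \<alpha> ^^ length s) x \<in> cyl \<alpha> [a]}"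
proof (induction s)
  case Nil
  then show ?case using cyl_subset_Kdom [of \<alpha> "[a]"] by auto
next
  case (Cons b s)
  have "(Tmap \<alpha> ^^ length (b # s)) x = (Tmap \<alpha> ^^ length s) (iota x - latt b)"
    if "x \<in> cyl \<alpha> (b # s)" for x
    using Tmap_cyl_Cons [OF that] by (simp add: funpow_Suc_right del: funpow.simps)
  then show ?case
    using Cons.IH by (auto simp: mem_cyl_Cons)
qed

lemma image_cyl_snoc:
  assumes "0 < \<alpha>" "\<alpha> \<le> 1"
  shows "(Tmap \<alpha> ^^ length (s @ [a])) ` cyl \<alpha> (s @ [a])
    = {y \<in> Kdom \<alpha>. y + latt a \<noteq> 0 \<and> iota (y + latt a) \<in> (Tmap \<alpha> ^^ length s) ` cyl \<alpha> s}"
    (is "_ = {y \<in> Kdom \<alpha>. y + latt a \<noteq> 0 \<and> iota (y + latt a) \<in> ?X}")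
proof -
  have X_Kdom: "?X \<subseteq> Kdom \<alpha>"
  proof (cases "length s")
    case 0
    then show ?thesis using cyl_subset_Kdom by simp
  next
    case (Suc n)
    then show ?thesis using Tmap_in_Kdom [OF assms] by (simp add: image_subset_iff)
  qed
  have "(Tmap \<alpha> ^^ length (s @ [a])) ` cyl \<alpha> (s @ [a]) = Tmap \<alpha> ` (?X \<inter> cyl \<alpha> [a])"
    unfolding cyl_snoc by (auto simp: image_comp)
  also have "\<dots> = (\<lambda>w. iota w - latt a) ` (?X \<inter> cyl \<alpha> [a])"
    by (intro image_cong) (auto intro: Tmap_cyl_Cons)
  also have "\<dots> = {y \<in> Kdom \<alpha>. y + latt a \<noteq> 0 \<and> iota (y + latt a) \<in> ?X}"
  proof (intro set_eqI iffI)
    fix y assume "y \<in> (\<lambda>w. iota w - latt a) ` (?X \<inter> cyl \<alpha> [a])"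
    then show "y \<in> {y \<in> Kdom \<alpha>. y + latt a \<noteq> 0 \<and> iota (y + latt a) \<in> ?X}"
      by (auto simp: mem_cyl_Cons)
  next
    fix y assume y: "y \<in> {y \<in> Kdom \<alpha>. y + latt a \<noteq> 0 \<and> iota (y + latt a) \<in> ?X}"
    then have "iota (y + latt a) \<in> ?X \<inter> cyl \<alpha> [a]"
      using X_Kdom by (auto simp: mem_cyl_Cons)
    then show "y \<in> (\<lambda>w. iota w - latt a) ` (?X \<inter> cyl \<alpha> [a])"
      by (rule rev_image_eqI) simp
  qed
  finally show ?thesis .
qed

lemma frontier_preimage_subset:
  assumes "open G" "continuous_on G f"
  shows "frontier {y \<in> G. f y \<in> V} \<subseteq> - G \<union> {y \<in> G. f y \<in> frontier V}"
proof
  fix y assume y: "y \<in> frontier {y \<in> G. f y \<in> V}"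
  show "y \<in> - G \<union> {y \<in> G. f y \<in> frontier V}"
  proof (rule ccontr)
    assume "\<not> ?thesis"
    then have "y \<in> G" and "f y \<in> interior V \<or> f y \<notin> closure V"
      by (auto simp: frontier_def)
    then consider "y \<in> G \<inter> f -` interior V" | "y \<in> G \<inter> f -` (- closure V)"
      by blast
    then show False
    proof cases
      case 1
      have "G \<inter> f -` interior V \<subseteq> interior {y \<in> G. f y \<in> V}"
        using interior_subset
        by (intro interior_maximal continuous_open_preimage [OF assms(2,1)]) auto
      with 1 y show False by (auto simp: frontier_def)
    next
      case 2
      have "open (G \<inter> f -` (- closure V))"
        by (intro continuous_open_preimage [OF assms(2,1)]) auto
      moreover have "(G \<inter> f -` (- closure V)) \<inter> {y \<in> G. f y \<in> V} = {}"
        using closure_subset by blast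
      ultimately have "(G \<inter> f -` (- closure V)) \<inter> closure {y \<in> G. f y \<in> V} = {}"
        using open_Int_closure_eq_empty by blast
      with 2 y show False by (auto simp: frontier_def)
    qed
  qed
qed

lemma continuous_on_iota: "continuous_on (- {0}) iota"
  unfolding iota_def by (intro continuous_intros) (auto simp: prod_eq_iff)

lemma open_iota_image:
  assumes "open U" "0 \<notin> U"
  shows "open (iota ` U)"
proof -
  have "iota ` U = - {0} \<inter> iota -` U"
    using assms(2) by (auto simp: image_iff) (metis iota_iota)
  then show ?thesis
    using continuous_open_preimage [OF continuous_on_iota _ assms(1)] by auto
qed

section \<open>The exceptional set is negligible\<close>

lemma iota_differentiable: "x \<noteq> 0 \<Longrightarrow> iota differentiable (at x)"
proof -
  assume "x \<noteq> 0"
  then have "(fst x)\<^sup>2 + (snd x)\<^sup>2 \<noteq> 0"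
    by (auto simp: prod_eq_iff)
  then show ?thesis
    unfolding iota_def [abs_def]
    by (intro differentiable_Pair differentiable_divide differentiable_minus differentiable_add
        differentiable_power bounded_linear_imp_differentiable bounded_linear_fst bounded_linear_snd)
      auto
qed

lemma negligible_iota_image: "negligible S \<Longrightarrow> negligible (iota ` (S - {0}))"
  by (rule negligible_differentiable_image_negligible [OF order_refl])
    (auto intro: negligible_subset differentiable_at_imp_differentiable_on iota_differentiable)

lemma negligible_Tmap_image:
  assumes "negligible S"
  shows "negligible (Tmap \<alpha> ` S)"
proof -
  let ?N = "iota ` (S - {0})"
  have "Tmap \<alpha> x \<in> {0} \<union> (\<Union>z. (+) (- latt z) ` ?N)" if "x \<in> S" for x
  proof (cases "x = 0")
    case False
    then have "Tmap \<alpha> x = - latt (nearest \<alpha> (iota x)) + iota x" and "iota x \<in> ?N"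
      using that by (auto simp: Tmap_def)
    then show ?thesis by blast
  qed (simp add: Tmap_def)
  then have "Tmap \<alpha> ` S \<subseteq> {0} \<union> (\<Union>z. (+) (- latt z) ` ?N)"
    by blast
  moreover have "negligible (\<Union>z. (+) (- latt z) ` ?N)"
    using negligible_translation [OF negligible_iota_image [OF assms]] by blast
  ultimately show ?thesis
    by (meson negligible_Un negligible_sing negligible_subset)
qed

lemma negligible_Eall: "negligible (Eall \<alpha>)"
proof -
  have "negligible (Eset \<alpha> n)" for n
  proof (induction n)
    case 0
    show ?case
      by (simp add: negligible_convex_frontier Kdom_Times convex_Times)
  next
    case (Suc n)
    then show ?case by (simp add: negligible_Tmap_image)
  qed
  then show ?thesis
    unfolding Eall_def by (intro negligible_countable_Union) auto
qed

lemma frontier_Kdom_subset_Eall: "frontier (Kdom \<alpha>) \<subseteq> Eall \<alpha>"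
  unfolding Eall_def by (metis Eset.simps(1) UN_upper UNIV_I)

lemma Tmap_in_Eall: "x \<in> Eall \<alpha> \<Longrightarrow> Tmap \<alpha> x \<in> Eall \<alpha>"
  unfolding Eall_def by (metis Eset.simps(2) UN_iff UnCI UNIV_I image_eqI)

section \<open>Generalized circles\<close>

type_synonym vec4 = "real \<times> real \<times> real \<times> real"

definition lift :: "pt \<Rightarrow> vec4" where
  "lift p = ((fst p)\<^sup>2 + (snd p)\<^sup>2, fst p, snd p, 1)"

definition gen_circle :: "vec4 \<Rightarrow> pt set" where
  "gen_circle v = {p. v \<bullet> lift p = 0}"

lemma mem_gen_circle:
  "(x, y) \<in> gen_circle (A, B, C, D) \<longleftrightarrow> A * (x\<^sup>2 + y\<^sup>2) + B * x + C * y + D = 0"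
  by (simp add: gen_circle_def lift_def add.assoc)

text \<open>Three distinct points of the paraboloid \<open>z = x\<^sup>2 + y\<^sup>2\<close> are never collinear.\<close>

lemma lift_not_in_span_pair:
  assumes "p \<noteq> q" "p \<noteq> r" "q \<noteq> r"
  shows "lift p \<notin> span {lift q, lift r}"
proof
  assume "lift p \<in> span {lift q, lift r}"
  then obtain a b where ab: "lift p = a *\<^sub>R lift q + b *\<^sub>R lift r"
    by (metis (no_types, lifting) diff_eq_eq span_breakdown_eq span_singleton rangeE add.commute)
  then have b: "b = 1 - a" by (simp add: lift_def)
  have px: "fst p = a * fst q + (1 - a) * fst r" and py: "snd p = a * snd q + (1 - a) * snd r"
    and sq: "(fst p)\<^sup>2 + (snd p)\<^sup>2 = a * ((fst q)\<^sup>2 + (snd q)\<^sup>2) + (1 - a) * ((fst r)\<^sup>2 + (snd r)\<^sup>2)"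
    using ab unfolding b by (auto simp: lift_def)
  have "a * (1 - a) * ((fst q - fst r)\<^sup>2 + (snd q - snd r)\<^sup>2) = 0"
    using sq unfolding px py by (simp add: power2_eq_square algebra_simps)
  moreover have "(fst q - fst r)\<^sup>2 + (snd q - snd r)\<^sup>2 \<noteq> 0"
    using assms(3) by (auto simp: prod_eq_iff)
  ultimately have "a = 0 \<or> a = 1" by auto
  then show False using assms(1,2) px py by (auto simp: prod_eq_iff)
qed

lemma independent_lift:
  assumes "distinct [p, q, r]"
  shows "independent {lift p, lift q, lift r}"
proof -
  have "lift q \<notin> span {lift r}"
    using assms by (auto simp: span_singleton lift_def prod_eq_iff)
  moreover have "lift p \<notin> span {lift q, lift r}"
    using assms by (intro lift_not_in_span_pair) auto
  moreover have "independent {lift r}"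
    by (simp add: lift_def zero_prod_def)
  ultimately show ?thesis
    by (meson independent_insertI)
qed

lemma inj_lift: "inj lift"
  by (auto simp: inj_def lift_def prod_eq_iff)

lemma gen_circle_three_points_unique:
  assumes "v \<noteq> 0" "w \<noteq> 0" "distinct [p, q, r]"
    and "{p, q, r} \<subseteq> gen_circle v" "{p, q, r} \<subseteq> gen_circle w"
  shows "\<exists>c. v = c *\<^sub>R w"
proof (rule ccontr)
  assume not_parallel: "\<nexists>c. v = c *\<^sub>R w"
  define E where "E = {lift p, lift q, lift r}"
  define Orth where "Orth = {y \<in> UNIV. \<forall>x \<in> span E. orthogonal x y}"
  have "card E = 3"
    using assms(3) inj_lift unfolding E_def by (auto simp: inj_eq)
  then have "dim (span E) = 3"
    using independent_lift[OF assms(3)] dim_span_eq_card_independent unfolding E_def by metis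
  moreover have "dim Orth + dim (span E) = dim (UNIV :: vec4 set)"
    unfolding Orth_def by (rule dim_subspace_orthogonal_to_vectors) auto
  ultimately have "dim Orth = 1" by simp
  have "u \<in> Orth" if "{p, q, r} \<subseteq> gen_circle u" for u
  proof -
    have "orthogonal u x" if "x \<in> span E" for x
      by (rule orthogonal_to_span[OF that])
        (use \<open>{p, q, r} \<subseteq> gen_circle u\<close> in \<open>auto simp: E_def gen_circle_def orthogonal_def\<close>)
    then show ?thesis by (auto simp: Orth_def orthogonal_commute)
  qed
  then have "{v, w} \<subseteq> Orth" using assms(4,5) by blast
  moreover have "independent {v, w}"
    using not_parallel assms(2) by (auto simp: independent_insert span_singleton)
  ultimately have "card {v, w} \<le> dim Orth" by (rule independent_card_le_dim)
  moreover have "v \<noteq> w" using not_parallel by (metis scaleR_one)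
  ultimately show False using \<open>dim Orth = 1\<close> by simp
qed

lemma gen_circle_unique:
  assumes "v \<noteq> 0" "w \<noteq> 0" "infinite S" "S \<subseteq> gen_circle v" "S \<subseteq> gen_circle w"
  shows "\<exists>c. v = c *\<^sub>R w"
proof -
  obtain T where "T \<subseteq> S" "finite T" "card T = 3"
    using infinite_arbitrarily_large [OF assms(3)] by blast
  then obtain p q r where "T = {p, q, r}" "distinct [p, q, r]"
    by (auto simp: card_3_iff)
  then show ?thesis
    using gen_circle_three_points_unique [OF assms(1,2)] assms(4,5) \<open>T \<subseteq> S\<close> by blast
qed

lemma gen_circle_scaleR: "c \<noteq> 0 \<Longrightarrow> gen_circle (c *\<^sub>R v) = gen_circle v"
  by (simp add: gen_circle_def)

fun circle_inversion :: "vec4 \<Rightarrow> vec4" where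
  "circle_inversion (A, B, C, D) = (D, B, - C, A)"

fun circle_translation :: "pt \<Rightarrow> vec4 \<Rightarrow> vec4" where
  "circle_translation (a, b) (A, B, C, D) =
     (A, B + 2 * A * a, C + 2 * A * b, D + A * (a\<^sup>2 + b\<^sup>2) + B * a + C * b)"

lemma linear_circle_inversion: "linear circle_inversion"
  by (auto simp: linear_iff)

lemma linear_circle_translation: "linear (circle_translation a)"
  by (cases a) (auto simp: linear_iff algebra_simps)

lemma circle_inversion_eq_0_iff [simp]: "circle_inversion v = 0 \<longleftrightarrow> v = 0"
  by (cases v) (auto simp: zero_prod_def)

lemma circle_translation_eq_0_iff [simp]: "circle_translation a v = 0 \<longleftrightarrow> v = 0"
  by (cases a; cases v) (auto simp: zero_prod_def)

lemma iota_mem_gen_circle_inversion: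
  assumes "p \<in> gen_circle v" "p \<noteq> 0"
  shows "iota p \<in> gen_circle (circle_inversion v)"
proof -
  obtain A B C D where v: "v = (A, B, C, D)" by (cases v)
  obtain x y where p: "p = (x, y)" by (cases p)
  define r where "r = x\<^sup>2 + y\<^sup>2"
  have "r \<noteq> 0"
    using assms(2) by (auto simp: p r_def prod_eq_iff)
  moreover have "A * r + B * x + C * y + D = 0"
    using assms(1) by (simp add: v p r_def mem_gen_circle)
  ultimately have "D * (1 / r) + B * (x / r) + - C * (- y / r) + A = 0"
    by (simp add: field_simps)
  then show ?thesis
    using sum_squares_iota [of p] by (simp add: v p r_def mem_gen_circle iota_def)
qed

lemma diff_mem_gen_circle_translation:
  "p \<in> gen_circle v \<Longrightarrow> p - a \<in> gen_circle (circle_translation a v)"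
  by (cases p; cases a; cases v) (simp add: mem_gen_circle power2_eq_square algebra_simps)

section \<open>The orbit of \<open>(0, 1 - \<alpha>)\<close>\<close>

definition int_span :: "real \<Rightarrow> real \<Rightarrow> real set" where
  "int_span a b = {of_int i * a + of_int j * b | i j. True}"

lemma mem_int_span: "x \<in> int_span a b \<longleftrightarrow> (\<exists>i j. x = of_int i * a + of_int j * b)"
  by (simp add: int_span_def)

lemma left_mem_int_span: "a \<in> int_span a b"
  unfolding mem_int_span by (rule exI [of _ 1], rule exI [of _ 0]) simp

lemma right_mem_int_span: "b \<in> int_span a b"
  unfolding mem_int_span by (rule exI [of _ 0], rule exI [of _ 1]) simp

lemma int_span_step: "int_span (- b - of_int m * a) a = int_span a b"
proof (intro set_eqI iffI)
  fix x assume "x \<in> int_span (- b - of_int m * a) a"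
  then obtain i j where "x = of_int i * (- b - of_int m * a) + of_int j * a"
    by (auto simp: mem_int_span)
  then have "x = of_int (j - i * m) * a + of_int (- i) * b"
    by (simp add: algebra_simps)
  then show "x \<in> int_span a b" unfolding mem_int_span by blast
next
  fix x assume "x \<in> int_span a b"
  then obtain i j where "x = of_int i * a + of_int j * b"
    by (auto simp: mem_int_span)
  then have "x = of_int (- j) * (- b - of_int m * a) + of_int (i - j * m) * a"
    by (simp add: algebra_simps)
  then show "x \<in> int_span (- b - of_int m * a) a" unfolding mem_int_span by blast
qed

lemma int_span_mult: "int_span (c * a) (c * b) = (*) c ` int_span a b"
proof -
  have *: "of_int i * (c * a) + of_int j * (c * b) = c * (of_int i * a + of_int j * b)" for i j
    by (simp add: algebra_simps)
  show ?thesis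
  proof (intro set_eqI iffI)
    fix x assume "x \<in> int_span (c * a) (c * b)"
    then obtain i j where "x = c * (of_int i * a + of_int j * b)"
      by (auto simp: mem_int_span *)
    then show "x \<in> (*) c ` int_span a b"
      by (intro rev_image_eqI [of "of_int i * a + of_int j * b"]) (auto simp: mem_int_span)
  next
    fix x assume "x \<in> (*) c ` int_span a b"
    then obtain y where "x = c * y" "y \<in> int_span a b" by blast
    then obtain i j where "x = c * (of_int i * a + of_int j * b)"
      unfolding mem_int_span by blast
    then show "x \<in> int_span (c * a) (c * b)"
      unfolding mem_int_span * by blast
  qed
qed

locale nonquadratic =
  fixes \<alpha> :: real
  assumes alpha_pos: "0 < \<alpha>" and alpha_less_1: "\<alpha> < 1"
    and no_quadratic_relation:
      "\<not> (\<exists>a b c :: int. (a, b, c) \<noteq> (0, 0, 0) \<and> of_int a * \<alpha>\<^sup>2 + of_int b * \<alpha> + of_int c = 0)"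
begin

definition \<beta> :: real where "\<beta> = 1 - \<alpha>"

lemma no_quadratic_relation_beta:
  assumes "(a, b, c) \<noteq> (0, 0, 0)"
  shows "of_int a * \<beta>\<^sup>2 + of_int b * \<beta> + of_int c \<noteq> 0"
proof
  assume "of_int a * \<beta>\<^sup>2 + of_int b * \<beta> + of_int c = 0"
  then have "of_int a * \<alpha>\<^sup>2 + of_int (- 2 * a - b) * \<alpha> + of_int (a + b + c) = 0"
    by (simp add: \<beta>_def power2_eq_square algebra_simps)
  moreover have "(a, - 2 * a - b, a + b + c) \<noteq> (0, 0, 0)"
    using assms by auto
  ultimately show False
    using no_quadratic_relation by blast
qed

lemma no_linear_relation_beta: "(b, c) \<noteq> (0, 0) \<Longrightarrow> of_int b * \<beta> + of_int c \<noteq> 0"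
  using no_quadratic_relation_beta [of 0 b c] by simp

lemma int_span_beta_not_cyclic: "int_span \<beta> 1 \<noteq> int_span 0 d"
proof
  assume "int_span \<beta> 1 = int_span 0 d"
  then have "1 \<in> int_span 0 d" "\<beta> \<in> int_span 0 d"
    using left_mem_int_span right_mem_int_span by metis+
  then obtain i j where "1 = of_int i * d" "\<beta> = of_int j * d"
    by (auto simp: mem_int_span)
  then have "of_int i * \<beta> = of_int j * (of_int i * d)"
    by (simp add: algebra_simps)
  then have "of_int i * \<beta> + of_int (- j) = 0"
    using \<open>1 = of_int i * d\<close> by simp
  moreover have "i \<noteq> 0"
    using \<open>1 = of_int i * d\<close> by auto
  ultimately show False
    using no_linear_relation_beta by blast
qed

lemma Ints_if_mult_int_span_beta:
  assumes "(*) c ` int_span \<beta> 1 \<subseteq> int_span \<beta> 1"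
  shows "c \<in> \<int>"
proof -
  have "c * 1 \<in> int_span \<beta> 1" "c * \<beta> \<in> int_span \<beta> 1"
    using assms left_mem_int_span right_mem_int_span by blast+
  then obtain i j i' j' where ij: "c = of_int i * \<beta> + of_int j"
    and "c * \<beta> = of_int i' * \<beta> + of_int j'"
    by (auto simp: mem_int_span)
  moreover have "c * \<beta> = of_int i * \<beta>\<^sup>2 + of_int j * \<beta>"
    using ij by (simp add: power2_eq_square algebra_simps)
  ultimately have "of_int i * \<beta>\<^sup>2 + of_int (j - i') * \<beta> + of_int (- j') = 0"
    by (simp add: algebra_simps)
  then have "(i, j - i', - j') = (0, 0, 0)"
    by (metis no_quadratic_relation_beta)
  then show "c \<in> \<int>"
    using ij by simp
qed

lemma int_span_beta_unit:
  assumes "(*) c ` int_span \<beta> 1 = int_span \<beta> 1"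
  shows "\<bar>c\<bar> = 1"
proof -
  have "c \<noteq> 0"
  proof
    assume "c = 0"
    then have "1 \<in> (*) c ` int_span \<beta> 1"
      using assms right_mem_int_span by metis
    with \<open>c = 0\<close> show False by auto
  qed
  have "(*) (1 / c) ` int_span \<beta> 1 = (*) (1 / c) ` ((*) c ` int_span \<beta> 1)"
    by (simp only: assms)
  also have "\<dots> = int_span \<beta> 1"
    using \<open>c \<noteq> 0\<close> by (simp add: image_comp o_def)
  finally have "1 / c \<in> \<int>"
    by (intro Ints_if_mult_int_span_beta) simp
  moreover have "c \<in> \<int>"
    by (intro Ints_if_mult_int_span_beta) (simp only: assms order_refl)
  ultimately obtain m n where "c = of_int m" "1 / c = of_int n"
    by (auto elim!: Ints_cases)
  with \<open>c \<noteq> 0\<close> have "m * n = 1"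
    by (metis nonzero_divide_eq_eq of_int_1 of_int_eq_iff of_int_mult mult.commute)
  then show ?thesis
    using \<open>c = of_int m\<close> by (auto simp: zmult_eq_1_iff)
qed

primrec orbit_y :: "nat \<Rightarrow> real" where
  "orbit_y 0 = \<beta>"
| "orbit_y (Suc k) = - 1 / orbit_y k - of_int \<lceil>- 1 / orbit_y k - \<beta>\<rceil>"

definition orbit_digit :: "nat \<Rightarrow> int" where
  "orbit_digit k = \<lceil>- 1 / orbit_y k - \<beta>\<rceil>"

lemma orbit_y_Suc: "orbit_y (Suc k) = - 1 / orbit_y k - of_int (orbit_digit k)"
  by (simp add: orbit_digit_def)

declare orbit_y.simps(2) [simp del]

lemma orbit_y_bounds: "- \<alpha> < orbit_y k \<and> orbit_y k \<le> \<beta>"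
proof (cases k)
  case 0
  then show ?thesis using alpha_pos by (simp add: \<beta>_def)
next
  case (Suc j)
  have "- 1 / orbit_y j - \<beta> \<le> of_int (orbit_digit j)"
    and "of_int (orbit_digit j) < - 1 / orbit_y j - \<beta> + 1"
    unfolding orbit_digit_def by linarith+
  then show ?thesis using Suc by (simp add: orbit_y_Suc \<beta>_def)
qed

lemma abs_orbit_y_less_1: "\<bar>orbit_y k\<bar> < 1"
  using orbit_y_bounds [of k] alpha_pos alpha_less_1 by (auto simp: \<beta>_def)

definition orbit_den :: "nat \<Rightarrow> real" where
  "orbit_den k = (\<Prod>j<k. orbit_y j)"

lemma orbit_den_Suc: "orbit_den (Suc k) = orbit_y k * orbit_den k"
  by (simp add: orbit_den_def)

text \<open>Consecutive denominators form a basis of \<open>\<int> + \<int>\<beta>\<close>; in particular none of them vanishes, so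
  the orbit never reaches \<open>0\<close>, where \<open>- 1 / y\<close> would be a junk value.\<close>

lemma int_span_orbit_den: "int_span (orbit_den (Suc k)) (orbit_den k) = int_span \<beta> 1"
proof (induction k)
  case 0
  show ?case by (simp add: orbit_den_def)
next
  case (Suc k)
  have "orbit_den (Suc k) \<noteq> 0"
    using Suc.IH int_span_beta_not_cyclic by force
  then have "orbit_y k \<noteq> 0"
    by (simp add: orbit_den_Suc)
  then have "orbit_den (Suc (Suc k)) = - orbit_den k - of_int (orbit_digit k) * orbit_den (Suc k)"
    by (simp add: orbit_den_Suc orbit_y_Suc field_simps)
  then show ?case
    using Suc.IH int_span_step by simp
qed

lemma orbit_den_nonzero: "orbit_den k \<noteq> 0"
proof (cases k)
  case (Suc j)
  then show ?thesis
    using int_span_orbit_den [of j] int_span_beta_not_cyclic by force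
qed (simp add: orbit_den_def)

lemma orbit_y_nonzero: "orbit_y k \<noteq> 0"
  using orbit_den_nonzero [of "Suc k"] by (simp add: orbit_den_Suc)

lemma abs_orbit_den_decreasing:
  assumes "k < l"
  shows "\<bar>orbit_den l\<bar> < \<bar>orbit_den k\<bar>"
proof -
  have "\<bar>orbit_den (Suc n)\<bar> < \<bar>orbit_den n\<bar>" for n
    using abs_orbit_y_less_1 [of n] orbit_den_nonzero [of n]
    by (simp add: orbit_den_Suc abs_mult)
  then show ?thesis
    using lift_Suc_mono_less [of "\<lambda>n. - \<bar>orbit_den n\<bar>", OF _ assms] by simp
qed

text \<open>If two orbit points coincided, the ratio of the corresponding denominators would map the
  lattice \<open>\<int> + \<int>\<beta>\<close> onto itself, so it would be a unit \<open>\<plusminus>1\<close>; but the denominators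
  strictly decrease in absolute value.\<close>

lemma inj_orbit_y: "inj orbit_y"
proof (rule linorder_injI)
  fix k l :: nat
  assume "k < l"
  show "orbit_y k \<noteq> orbit_y l"
  proof
    assume eq: "orbit_y k = orbit_y l"
    define c where "c = orbit_den l / orbit_den k"
    have l: "orbit_den l = c * orbit_den k"
      using orbit_den_nonzero by (simp add: c_def)
    then have "orbit_den (Suc l) = c * orbit_den (Suc k)"
      using eq by (simp add: orbit_den_Suc)
    with l have "(*) c ` int_span \<beta> 1 = int_span \<beta> 1"
      using int_span_orbit_den [of k] int_span_orbit_den [of l] int_span_mult by metis
    then have "\<bar>orbit_den l\<bar> = \<bar>orbit_den k\<bar>"
      using int_span_beta_unit l by (simp add: abs_mult)
    with abs_orbit_den_decreasing [OF \<open>k < l\<close>] show False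
      by simp
  qed
qed

lemma orbit_y_Suc_less: "orbit_y (Suc k) < \<beta>"
  using orbit_y_bounds [of "Suc k"] inj_orbit_y
  by (metis injD nat.distinct(1) order_less_le orbit_y.simps(1))

lemma orbit_digit_nonzero: "orbit_digit k \<noteq> 0"
proof
  assume "orbit_digit k = 0"
  then have "\<bar>orbit_y (Suc k)\<bar> = 1 / \<bar>orbit_y k\<bar>"
    by (simp add: orbit_y_Suc)
  moreover have "1 < 1 / \<bar>orbit_y k\<bar>"
    using abs_orbit_y_less_1 [of k] orbit_y_nonzero [of k] by simp
  ultimately show False
    using abs_orbit_y_less_1 [of "Suc k"] by simp
qed

definition orbit_pt :: "nat \<Rightarrow> pt" where
  "orbit_pt k = (0, orbit_y k)"

definition orbit_shift :: "nat \<Rightarrow> pt" where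
  "orbit_shift k = latt (0, orbit_digit k)"

lemma orbit_pt_Suc: "orbit_pt (Suc k) = iota (orbit_pt k) - orbit_shift k"
  by (simp add: orbit_pt_def orbit_shift_def iota_def orbit_y_Suc latt_def power2_eq_square)

lemma orbit_pt_in_Kdom: "orbit_pt k \<in> Kdom \<alpha>"
  using orbit_y_bounds [of k] by (simp add: orbit_pt_def mem_Kdom \<beta>_def)

lemma orbit_pt_nonzero: "orbit_pt k \<noteq> 0"
  using orbit_y_nonzero [of k] by (simp add: orbit_pt_def zero_prod_def)

lemma inj_orbit_pt: "inj orbit_pt"
  using inj_orbit_y by (simp add: inj_def orbit_pt_def)

lemma orbit_shift_notin_closure: "- orbit_shift k \<notin> closure (Kdom \<alpha>)"
proof
  assume "- orbit_shift k \<in> closure (Kdom \<alpha>)"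
  moreover have "- orbit_shift k = (0, - of_int (orbit_digit k))"
    by (simp add: orbit_shift_def latt_def)
  ultimately have "\<bar>of_int (orbit_digit k)\<bar> < (1::real)"
    using alpha_pos alpha_less_1 by (auto simp: closure_Kdom)
  then show False
    using orbit_digit_nonzero [of k] by linarith
qed

definition branch :: "nat \<Rightarrow> pt \<Rightarrow> pt" where
  "branch k y = iota (y + orbit_shift k)"

lemma iota_branch: "iota (branch k y) = y + orbit_shift k"
  by (simp add: branch_def)

lemma branch_orbit_pt: "branch k (orbit_pt (Suc k)) = orbit_pt k"
  by (simp add: branch_def orbit_pt_Suc)

lemma Tmap_branch:
  assumes "y \<in> Kdom \<alpha>" "y + orbit_shift k \<noteq> 0"
  shows "Tmap \<alpha> (branch k y) = y"
  using assms by (subst Tmap_eq [where z = "(0, orbit_digit k)"]) (auto simp: branch_def orbit_shift_def)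

lemma continuous_on_branch: "continuous_on (- {- orbit_shift k}) (branch k)"
  unfolding branch_def
  by (rule continuous_on_compose2 [OF continuous_on_iota continuous_on_add [OF continuous_on_id continuous_on_const]])
    (auto simp: add_eq_0_iff2)

lemma open_branch_image:
  assumes "open U" "- orbit_shift k \<notin> U"
  shows "open (branch k ` U)"
proof -
  have "branch k ` U = iota ` ((+) (orbit_shift k) ` U)"
    by (auto simp: branch_def image_comp add.commute)
  moreover have "0 \<notin> (+) (orbit_shift k) ` U"
    using assms(2) by (auto simp: add_eq_0_iff2 add.commute)
  ultimately show ?thesis
    using open_iota_image open_translation [OF assms(1)] by metis
qed

primrec V :: "nat \<Rightarrow> pt set" where
  "V 0 = Kdom \<alpha>"
| "V (Suc k) = {y \<in> Kdom \<alpha>. y + orbit_shift k \<noteq> 0 \<and> branch k y \<in> V k}"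

lemma V_subset_Kdom: "V k \<subseteq> Kdom \<alpha>"
  by (cases k) auto

lemma orbit_pt_in_V: "orbit_pt k \<in> V k"
proof (induction k)
  case (Suc k)
  have "orbit_pt (Suc k) + orbit_shift k = iota (orbit_pt k)"
    by (simp add: orbit_pt_Suc)
  then show ?case
    using Suc orbit_pt_in_Kdom orbit_pt_nonzero by (simp add: branch_def)
qed (simp add: orbit_pt_in_Kdom)

definition orbit_word :: "nat \<Rightarrow> (int \<times> int) list" where
  "orbit_word k = map (\<lambda>j. (0, orbit_digit j)) [0..<k]"

lemma image_cyl_orbit_word: "(Tmap \<alpha> ^^ k) ` cyl \<alpha> (orbit_word k) = V k"
proof (induction k)
  case (Suc k)
  have "orbit_word (Suc k) = orbit_word k @ [(0, orbit_digit k)]"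
    by (simp add: orbit_word_def)
  moreover have "length (orbit_word k) = k"
    by (simp add: orbit_word_def)
  ultimately show ?case
    using image_cyl_snoc [OF alpha_pos less_imp_le [OF alpha_less_1], of "orbit_word k"] Suc.IH
    by (simp add: branch_def orbit_shift_def)
qed (simp add: orbit_word_def)

section \<open>Inverse branches along the orbit\<close>

text \<open>\<open>branches k\<close> is the local inverse of \<open>T^k\<close> near \<open>orbit_pt k\<close>.\<close>

primrec branches :: "nat \<Rightarrow> pt \<Rightarrow> pt" where
  "branches 0 y = y"
| "branches (Suc k) y = branches k (branch k y)"

primrec branch_nbhd :: "nat \<Rightarrow> pt set" where
  "branch_nbhd 0 = UNIV"
| "branch_nbhd (Suc k) =
     {y \<in> interior (Kdom \<alpha>). y + orbit_shift k \<noteq> 0 \<and> branch k y \<in> branch_nbhd k}"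

lemma branch_nbhd_Suc_eq:
  "branch_nbhd (Suc k) = (interior (Kdom \<alpha>) \<inter> - {- orbit_shift k}) \<inter> branch k -` branch_nbhd k"
  by (auto simp: add_eq_0_iff2)

lemma open_branch_nbhd: "open (branch_nbhd k)"
proof (induction k)
  case (Suc k)
  show ?case
    unfolding branch_nbhd_Suc_eq
    by (rule continuous_open_preimage [OF continuous_on_subset [OF continuous_on_branch] _ Suc])
      auto
qed simp

lemma continuous_on_branches: "continuous_on (branch_nbhd k) (branches k)"
proof (induction k)
  case (Suc k)
  have "continuous_on (branch_nbhd (Suc k)) (branch k)"
    by (rule continuous_on_subset [OF continuous_on_branch]) (auto simp: add_eq_0_iff2)
  then show ?case
    using continuous_on_compose2 [OF Suc] by fastforce
qed simp

lemma open_branches_image: "open U \<Longrightarrow> U \<subseteq> branch_nbhd k \<Longrightarrow> open (branches k ` U)"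
proof (induction k arbitrary: U)
  case (Suc k)
  have "open (branch k ` U)"
    using Suc.prems by (intro open_branch_image) (auto simp: add_eq_0_iff2)
  moreover have "branch k ` U \<subseteq> branch_nbhd k"
    using Suc.prems by auto
  ultimately have "open (branches k ` branch k ` U)"
    by (rule Suc.IH)
  then show ?case
    by (simp add: image_comp o_def)
qed simp

lemma branches_orbit_pt: "branches k (orbit_pt k) = orbit_pt 0"
  by (induction k) (simp_all add: branch_orbit_pt)

lemma orbit_pt_in_branch_nbhd: "orbit_pt k \<in> branch_nbhd k"
proof (induction k)
  case (Suc k)
  have "orbit_pt (Suc k) \<in> interior (Kdom \<alpha>)"
    using orbit_y_bounds [of "Suc k"] orbit_y_Suc_less [of k]
    by (simp add: interior_Kdom orbit_pt_def \<beta>_def)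
  moreover have "orbit_pt (Suc k) + orbit_shift k \<noteq> 0"
    using orbit_pt_nonzero by (simp add: orbit_pt_Suc)
  ultimately show ?case
    using Suc by (simp add: branch_orbit_pt)
qed simp

lemma mem_V_iff_branches:
  "y \<in> branch_nbhd k \<Longrightarrow> y \<in> V k \<longleftrightarrow> branches k y \<in> Kdom \<alpha>"
  by (induction k arbitrary: y) (auto dest: interior_subset [THEN subsetD])

primrec circle_pullback :: "nat \<Rightarrow> vec4 \<Rightarrow> vec4" where
  "circle_pullback 0 v = v"
| "circle_pullback (Suc k) v = circle_translation (orbit_shift k) (circle_inversion (circle_pullback k v))"

lemma branch_mem_gen_circle:
  assumes "y + orbit_shift k \<noteq> 0" "branch k y \<in> gen_circle v"
  shows "y \<in> gen_circle (circle_translation (orbit_shift k) (circle_inversion v))"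
proof -
  have "branch k y \<noteq> 0"
    using assms(1) by (simp add: branch_def)
  then have "y + orbit_shift k \<in> gen_circle (circle_inversion v)"
    using iota_mem_gen_circle_inversion [OF assms(2)] by (simp add: iota_branch)
  from diff_mem_gen_circle_translation [OF this, of "orbit_shift k"] show ?thesis
    by simp
qed

lemma branches_mem_gen_circle:
  "y \<in> branch_nbhd k \<Longrightarrow> branches k y \<in> gen_circle v \<Longrightarrow> y \<in> gen_circle (circle_pullback k v)"
proof (induction k arbitrary: y)
  case (Suc k)
  then have "branch k y \<in> gen_circle (circle_pullback k v)"
    by simp
  with Suc.prems show ?case
    by (simp add: branch_mem_gen_circle)
qed simp

lemma linear_circle_pullback: "linear (circle_pullback k)"
proof (induction k)
  case (Suc k)
  then show ?case
    using linear_compose [OF linear_compose [OF Suc linear_circle_inversion] linear_circle_translation]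
    by (simp add: o_def)
qed (simp add: linear_id [unfolded id_def])

lemma circle_pullback_eq_0_iff [simp]: "circle_pullback k v = 0 \<longleftrightarrow> v = 0"
  by (induction k) simp_all

lemma circle_pullback_Ints:
  "v \<in> \<int> \<times> \<int> \<times> \<int> \<times> \<int> \<Longrightarrow> circle_pullback k v \<in> \<int> \<times> \<int> \<times> \<int> \<times> \<int>"
proof (induction k)
  case (Suc k)
  then show ?case
    by (cases "circle_pullback k v") (auto simp: orbit_shift_def latt_def)
qed simp

definition top_line :: vec4 where
  "top_line = (0, 0, 1, - \<beta>)"

definition y_axis :: vec4 where
  "y_axis = (0, 1, 0, 0)"

lemma mem_gen_circle_top_line: "p \<in> gen_circle top_line \<longleftrightarrow> snd p = \<beta>"
  by (cases p) (simp add: top_line_def mem_gen_circle)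

lemma mem_gen_circle_y_axis: "p \<in> gen_circle y_axis \<longleftrightarrow> fst p = 0"
  by (cases p) (simp add: y_axis_def mem_gen_circle)

lemma Ints_plus_beta_times_eq_0:
  assumes "a \<in> \<int>" "b \<in> \<int>" "a + \<beta> * b = 0"
  shows "a = 0 \<and> b = 0"
proof -
  obtain m n where "a = of_int m" "b = of_int n"
    using assms(1,2) by (auto elim!: Ints_cases)
  with assms(3) have "of_int n * \<beta> + of_int m = 0"
    by (simp add: algebra_simps)
  then show ?thesis
    using no_linear_relation_beta \<open>a = of_int m\<close> \<open>b = of_int n\<close> by fastforce
qed

text \<open>Writing the pulled back top line as \<open>p + \<beta> q\<close> with integral \<open>p\<close>, \<open>q\<close>, being a multiple of
  the \<open>y\<close>-axis would force \<open>p\<close> and \<open>q\<close> to be dependent multiples of it.\<close>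

lemma circle_pullback_top_line_not_y_axis: "circle_pullback k top_line \<noteq> c *\<^sub>R y_axis"
proof
  assume eq: "circle_pullback k top_line = c *\<^sub>R y_axis"
  define p where "p = circle_pullback k (0, 0, 1, 0)"
  define q where "q = circle_pullback k (0, 0, 0, - 1)"
  note lin = linear_circle_pullback [of k]
  have "circle_pullback k top_line = circle_pullback k ((0, 0, 1, 0) + \<beta> *\<^sub>R (0, 0, 0, - 1))"
    by (simp add: top_line_def)
  also have "\<dots> = p + \<beta> *\<^sub>R q"
    by (simp only: p_def q_def linear_add [OF lin] linear_scale [OF lin])
  finally have "circle_pullback k top_line = p + \<beta> *\<^sub>R q" .
  moreover obtain p1 p2 p3 p4 q1 q2 q3 q4
    where pq: "p = (p1, p2, p3, p4)" "q = (q1, q2, q3, q4)"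
    by (cases p, cases q) auto
  moreover have "p1 \<in> \<int>" "p2 \<in> \<int>" "p3 \<in> \<int>" "p4 \<in> \<int>" "q1 \<in> \<int>" "q2 \<in> \<int>" "q3 \<in> \<int>" "q4 \<in> \<int>"
    using circle_pullback_Ints [of "(0, 0, 1, 0)" k] circle_pullback_Ints [of "(0, 0, 0, - 1)" k]
    by (auto simp: p_def q_def pq [unfolded p_def q_def])
  ultimately have "p1 = 0" "q1 = 0" "p3 = 0" "q3 = 0" "p4 = 0" "q4 = 0"
    using eq Ints_plus_beta_times_eq_0 by (auto simp: y_axis_def)
  then have "q2 *\<^sub>R p - p2 *\<^sub>R q = 0"
    by (simp add: pq zero_prod_def)
  moreover have "circle_pullback k (q2 *\<^sub>R (0, 0, 1, 0) - p2 *\<^sub>R (0, 0, 0, - 1)) = q2 *\<^sub>R p - p2 *\<^sub>R q"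
    by (simp only: p_def q_def linear_diff [OF lin] linear_scale [OF lin])
  ultimately have "circle_pullback k (q2 *\<^sub>R (0, 0, 1, 0) - p2 *\<^sub>R (0, 0, 0, - 1)) = 0"
    by metis
  then have "p2 = 0" "q2 = 0"
    unfolding circle_pullback_eq_0_iff by (simp_all add: zero_prod_def)
  then have "p = 0"
    using \<open>p1 = 0\<close> \<open>p3 = 0\<close> \<open>p4 = 0\<close> pq by (simp add: zero_prod_def)
  then show False
    unfolding p_def circle_pullback_eq_0_iff by (simp add: zero_prod_def)
qed

lemma top_line_nonzero: "top_line \<noteq> 0"
  by (simp add: top_line_def zero_prod_def)

definition orbit_arc :: "nat \<Rightarrow> pt set" where
  "orbit_arc k = {y \<in> branch_nbhd k. snd (branches k y) = \<beta> \<and> \<bar>fst (branches k y)\<bar> < 1/2}"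

lemma orbit_arc_subset_gen_circle: "orbit_arc k \<subseteq> gen_circle (circle_pullback k top_line)"
proof
  fix y assume "y \<in> orbit_arc k"
  then show "y \<in> gen_circle (circle_pullback k top_line)"
    using branches_mem_gen_circle [of y k top_line] by (simp add: orbit_arc_def mem_gen_circle_top_line)
qed

lemma orbit_pt_in_orbit_arc: "orbit_pt k \<in> orbit_arc k"
  using orbit_pt_in_branch_nbhd [of k] branches_orbit_pt [of k] by (simp add: orbit_arc_def orbit_pt_def)

lemma infinite_orbit_arc: "infinite (orbit_arc k)"
proof
  assume fin: "finite (orbit_arc k)"
  have "open (branches k ` branch_nbhd k)"
    by (simp add: open_branches_image open_branch_nbhd)
  moreover have "(0, \<beta>) \<in> branches k ` branch_nbhd k"
    using orbit_pt_in_branch_nbhd branches_orbit_pt by (metis image_eqI orbit_pt_def orbit_y.simps(1))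
  ultimately obtain e where "e > 0" "ball (0, \<beta>) e \<subseteq> branches k ` branch_nbhd k"
    using open_contains_ball by blast
  define d where "d = min e (1/2)"
  have "(\<lambda>t. (t, \<beta>)) ` {0<..<d} \<subseteq> branches k ` orbit_arc k"
  proof
    fix z assume "z \<in> (\<lambda>t. (t, \<beta>)) ` {0<..<d}"
    then obtain t where t: "0 < t" "t < d" "z = (t, \<beta>)" by auto
    then have "z \<in> ball (0, \<beta>) e"
      by (simp add: d_def dist_Pair_Pair dist_real_def)
    then obtain y where "y \<in> branch_nbhd k" "branches k y = z"
      using \<open>ball (0, \<beta>) e \<subseteq> _\<close> by blast
    with t show "z \<in> branches k ` orbit_arc k"
      by (force simp: orbit_arc_def d_def)
  qed
  moreover have "infinite ((\<lambda>t. (t, \<beta>)) ` {0<..<d})"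
  proof
    assume "finite ((\<lambda>t. (t, \<beta>)) ` {0<..<d})"
    then have "finite {0<..<d}"
      by (rule finite_imageD) (auto simp: inj_on_def)
    moreover have "0 < d"
      using \<open>e > 0\<close> by (simp add: d_def)
    ultimately show False
      using infinite_Ioo by blast
  qed
  ultimately show False
    using fin by (meson finite_imageI finite_subset)
qed

lemma orbit_arc_vertical_neighbours:
  assumes "p \<in> orbit_arc k" "open U" "p \<in> U"
  obtains d y y' where "0 < d" "d < 1"
    "y \<in> U \<inter> branch_nbhd k" "branches k y = (fst (branches k p), \<beta> - d)"
    "y' \<in> U \<inter> branch_nbhd k" "branches k y' = (fst (branches k p), \<beta> + d)"
proof -
  have "open (branches k ` (U \<inter> branch_nbhd k))"
    using assms(2) by (simp add: open_branches_image open_branch_nbhd open_Int)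
  moreover have "branches k p \<in> branches k ` (U \<inter> branch_nbhd k)"
    using assms by (auto simp: orbit_arc_def)
  ultimately obtain e where "e > 0" and e: "ball (branches k p) e \<subseteq> branches k ` (U \<inter> branch_nbhd k)"
    using open_contains_ball by blast
  define d where "d = min (e/2) (1/2)"
  have "branches k p = (fst (branches k p), \<beta>)"
    using assms(1) by (simp add: orbit_arc_def prod_eq_iff)
  moreover have "dist (x, \<beta>) (x, \<beta> + s) = \<bar>s\<bar>" for x s :: real
    by (simp add: dist_Pair_Pair dist_real_def)
  ultimately have "(fst (branches k p), \<beta> + s) \<in> branches k ` (U \<inter> branch_nbhd k)"
    if "\<bar>s\<bar> < e" for s
    using e that by (metis mem_ball subsetD)
  moreover have d: "0 < d" "d < 1" "\<bar>- d\<bar> < e" "\<bar>d\<bar> < e"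
    using \<open>e > 0\<close> by (auto simp: d_def)
  ultimately have "(fst (branches k p), \<beta> + - d) \<in> branches k ` (U \<inter> branch_nbhd k)"
    and "(fst (branches k p), \<beta> + d) \<in> branches k ` (U \<inter> branch_nbhd k)"
    by blast+
  then obtain y y' where
    "y \<in> U \<inter> branch_nbhd k" "branches k y = (fst (branches k p), \<beta> - d)"
    "y' \<in> U \<inter> branch_nbhd k" "branches k y' = (fst (branches k p), \<beta> + d)"
    by (auto simp: image_iff)
  with d show ?thesis
    by (intro that) auto
qed

lemma orbit_arc_two_sided:
  assumes "p \<in> orbit_arc k" "open U" "p \<in> U"
  shows "\<exists>U'. open U' \<and> U' \<noteq> {} \<and> U' \<subseteq> U \<inter> V k"
    and "\<exists>U'. open U' \<and> U' \<noteq> {} \<and> U' \<subseteq> U - V k"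
proof -
  let ?W = "U \<inter> branch_nbhd k"
  have W: "open ?W" "continuous_on ?W (branches k)"
    using assms(2) open_branch_nbhd continuous_on_branches continuous_on_subset by blast+
  obtain d y y' where d: "0 < d" "d < 1"
    and y: "y \<in> ?W" "branches k y = (fst (branches k p), \<beta> - d)"
    and y': "y' \<in> ?W" "branches k y' = (fst (branches k p), \<beta> + d)"
    using orbit_arc_vertical_neighbours [OF assms] .
  have x: "\<bar>fst (branches k p)\<bar> < 1/2"
    using assms(1) by (simp add: orbit_arc_def)
  show "\<exists>U'. open U' \<and> U' \<noteq> {} \<and> U' \<subseteq> U \<inter> V k"
  proof (intro exI conjI)
    show "open (?W \<inter> branches k -` interior (Kdom \<alpha>))"
      using W by (intro continuous_open_preimage) auto
    have "branches k y \<in> interior (Kdom \<alpha>)"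
      using x d by (auto simp: y(2) interior_Kdom \<beta>_def)
    then show "?W \<inter> branches k -` interior (Kdom \<alpha>) \<noteq> {}"
      using y(1) by blast
    show "?W \<inter> branches k -` interior (Kdom \<alpha>) \<subseteq> U \<inter> V k"
      using mem_V_iff_branches interior_subset by blast
  qed
  show "\<exists>U'. open U' \<and> U' \<noteq> {} \<and> U' \<subseteq> U - V k"
  proof (intro exI conjI)
    show "open (?W \<inter> branches k -` (- closure (Kdom \<alpha>)))"
      using W by (intro continuous_open_preimage) auto
    have "branches k y' \<notin> closure (Kdom \<alpha>)"
      using d by (auto simp: y'(2) closure_Kdom \<beta>_def)
    then show "?W \<inter> branches k -` (- closure (Kdom \<alpha>)) \<noteq> {}"
      using y'(1) by blast
    show "?W \<inter> branches k -` (- closure (Kdom \<alpha>)) \<subseteq> U - V k"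
      using mem_V_iff_branches closure_subset by blast
  qed
qed

section \<open>Frontiers of the cylinder images\<close>

lemma frontier_V_subset_closure: "frontier (V k) \<subseteq> closure (Kdom \<alpha>)"
  using closure_mono [OF V_subset_Kdom] by (auto simp: frontier_def)

lemma frontier_V_Suc_subset:
  "frontier (V (Suc k)) \<subseteq> frontier (Kdom \<alpha>) \<union> {y. y + orbit_shift k \<noteq> 0 \<and> branch k y \<in> frontier (V k)}"
proof
  fix y assume y: "y \<in> frontier (V (Suc k))"
  let ?P = "{y \<in> - {- orbit_shift k}. branch k y \<in> V k}"
  have "V (Suc k) = Kdom \<alpha> \<inter> ?P"
    by (auto simp: eq_neg_iff_add_eq_0)
  then have "frontier (V (Suc k)) \<subseteq> frontier (Kdom \<alpha>) \<union> frontier ?P"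
    by (simp only: frontier_Int_subset)
  moreover have "frontier ?P \<subseteq> - (- {- orbit_shift k}) \<union> {y \<in> - {- orbit_shift k}. branch k y \<in> frontier (V k)}"
    by (rule frontier_preimage_subset [OF _ continuous_on_branch]) auto
  moreover have "y \<noteq> - orbit_shift k"
    using y frontier_V_subset_closure orbit_shift_notin_closure by blast
  ultimately have "y \<in> frontier (Kdom \<alpha>) \<or> y \<noteq> - orbit_shift k \<and> branch k y \<in> frontier (V k)"
    using y by blast
  then show "y \<in> frontier (Kdom \<alpha>) \<union> {y. y + orbit_shift k \<noteq> 0 \<and> branch k y \<in> frontier (V k)}"
    by (auto simp: eq_neg_iff_add_eq_0)
qed

lemma frontier_V_subset_Eall: "frontier (V k) \<subseteq> Eall \<alpha>"
proof (induction k)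
  case 0
  show ?case using frontier_Kdom_subset_Eall by simp
next
  case (Suc k)
  show ?case
  proof
    fix y assume y: "y \<in> frontier (V (Suc k))"
    show "y \<in> Eall \<alpha>"
    proof (cases "y \<in> frontier (Kdom \<alpha>)")
      case False
      then have "y + orbit_shift k \<noteq> 0" "branch k y \<in> Eall \<alpha>"
        using y frontier_V_Suc_subset Suc.IH by blast+
      moreover have "y \<in> closure (Kdom \<alpha>)"
        using y frontier_V_subset_closure by blast
      with False have "y \<in> Kdom \<alpha>"
        using interior_subset by (auto simp: frontier_def)
      ultimately show ?thesis
        using Tmap_in_Eall Tmap_branch by metis
    qed (use frontier_Kdom_subset_Eall in blast)
  qed
qed

definition Kdom_edges :: "vec4 set" where
  "Kdom_edges = {(0, 1, 0, 1/2), (0, 1, 0, - 1/2), (0, 0, 1, \<alpha>), (0, 0, 1, - \<beta>)}"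

lemma finite_Kdom_edges: "finite Kdom_edges"
  and zero_notin_Kdom_edges: "0 \<notin> Kdom_edges"
  by (simp_all add: Kdom_edges_def zero_prod_def)

lemma frontier_Kdom_subset_edges: "frontier (Kdom \<alpha>) \<subseteq> \<Union>(gen_circle ` Kdom_edges)"
proof
  fix y assume y: "y \<in> frontier (Kdom \<alpha>)"
  obtain a b where ab: "y = (a, b)"
    by (cases y)
  have "y \<in> closure (Kdom \<alpha>)" "y \<notin> interior (Kdom \<alpha>)"
    using y by (auto simp: frontier_def)
  then have "a \<in> {- 1/2..1/2}" "b \<in> {- \<alpha>..1 - \<alpha>}" "\<not> (a \<in> {- 1/2<..<1/2} \<and> b \<in> {- \<alpha><..<1 - \<alpha>})"
    by (simp_all only: ab closure_Kdom interior_Kdom mem_Times_iff fst_conv snd_conv not_False_eq_True)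
  then have "a = - 1/2 \<or> a = 1/2 \<or> b = - \<alpha> \<or> b = \<beta>"
    unfolding \<beta>_def by auto
  then show "y \<in> \<Union>(gen_circle ` Kdom_edges)"
    by (auto simp: ab Kdom_edges_def mem_gen_circle)
qed

lemma frontier_V_subset_gen_circles:
  "\<exists>C. finite C \<and> 0 \<notin> C \<and> frontier (V k) \<subseteq> \<Union>(gen_circle ` C)"
proof (induction k)
  case 0
  show ?case
    using finite_Kdom_edges zero_notin_Kdom_edges frontier_Kdom_subset_edges by auto
next
  case (Suc k)
  then obtain C where C: "finite C" "0 \<notin> C" "frontier (V k) \<subseteq> \<Union>(gen_circle ` C)"
    by blast
  let ?C = "Kdom_edges \<union> (\<lambda>v. circle_translation (orbit_shift k) (circle_inversion v)) ` C"
  have "y \<in> \<Union>(gen_circle ` ?C)" if y: "y \<in> frontier (V (Suc k))" for y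
  proof (cases "y \<in> frontier (Kdom \<alpha>)")
    case True
    then show ?thesis
      using frontier_Kdom_subset_edges by blast
  next
    case False
    then have "y + orbit_shift k \<noteq> 0" "branch k y \<in> frontier (V k)"
      using y frontier_V_Suc_subset by blast+
    then obtain v where "v \<in> C" "branch k y \<in> gen_circle v"
      using C(3) by blast
    then show ?thesis
      using branch_mem_gen_circle [OF \<open>y + orbit_shift k \<noteq> 0\<close>] by blast
  qed
  moreover have "finite ?C" "0 \<notin> ?C"
    using C(1,2) finite_Kdom_edges zero_notin_Kdom_edges by (auto simp: image_iff eq_commute [of "0::vec4"])
  ultimately show ?case
    by (intro exI [of _ ?C]) blast
qed


lemma orbit_arc_circle_in_cover:
  assumes "finite C" "0 \<notin> C" "orbit_arc k \<subseteq> \<Union>(gen_circle ` C)"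
  shows "\<exists>c\<in>C. \<exists>t. circle_pullback k top_line = t *\<^sub>R c"
proof -
  have "orbit_arc k = (\<Union>c\<in>C. orbit_arc k \<inter> gen_circle c)"
    using assms(3) by blast
  then obtain c where "c \<in> C" "infinite (orbit_arc k \<inter> gen_circle c)"
    using infinite_orbit_arc [of k] assms(1) by (metis finite_UN)
  moreover have "circle_pullback k top_line \<noteq> 0"
    by (simp add: top_line_nonzero)
  ultimately show ?thesis
    using gen_circle_unique [of _ c "orbit_arc k \<inter> gen_circle c"] orbit_arc_subset_gen_circle assms(2) by blast
qed

lemma orbit_pt_mem_gen_circle:
  assumes "circle_pullback k top_line = t *\<^sub>R c"
  shows "orbit_pt k \<in> gen_circle c"
proof -
  have "t \<noteq> 0"
  proof
    assume "t = 0"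
    with assms have "circle_pullback k top_line = 0"
      by simp
    with top_line_nonzero show False
      by simp
  qed
  moreover have "orbit_pt k \<in> gen_circle (circle_pullback k top_line)"
    using orbit_arc_subset_gen_circle orbit_pt_in_orbit_arc by blast
  ultimately show ?thesis
    using assms by (simp add: gen_circle_scaleR)
qed

text \<open>A circle containing arcs of infinitely many \<open>V k\<close> contains infinitely many orbit
  points, so it is the \<open>y\<close>-axis; but no pulled back top line is the \<open>y\<close>-axis.\<close>

lemma orbit_arc_not_covered:
  assumes "infinite S" "finite C" "0 \<notin> C"
  shows "\<exists>k\<in>S. \<not> orbit_arc k \<subseteq> \<Union>(gen_circle ` C)"
proof (rule ccontr)
  assume "\<not> ?thesis"
  then have "\<forall>k\<in>S. \<exists>c. c \<in> C \<and> (\<exists>t. circle_pullback k top_line = t *\<^sub>R c)"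
    using orbit_arc_circle_in_cover [OF assms(2,3)] by (simp add: Bex_def)
  from bchoice [OF this] obtain f
    where f: "\<And>k. k \<in> S \<Longrightarrow> f k \<in> C \<and> (\<exists>t. circle_pullback k top_line = t *\<^sub>R f k)"
    by blast
  then have "f ` S \<subseteq> C"
    by blast
  then have "finite (f ` S)"
    using assms(2) by (rule finite_subset)
  then obtain k0 where "k0 \<in> S" and inf: "infinite {k \<in> S. f k = f k0}"
    using pigeonhole_infinite [OF assms(1)] by blast
  have c: "f k0 \<noteq> 0"
    using f [OF \<open>k0 \<in> S\<close>] assms(3) by auto
  have "orbit_pt k \<in> gen_circle (f k0)" if "k \<in> S" "f k = f k0" for k
  proof -
    obtain t where "circle_pullback k top_line = t *\<^sub>R f k0"
      using f [OF \<open>k \<in> S\<close>] \<open>f k = f k0\<close> by auto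
    then show ?thesis
      by (rule orbit_pt_mem_gen_circle)
  qed
  then have "orbit_pt ` {k \<in> S. f k = f k0} \<subseteq> gen_circle (f k0)"
    by blast
  moreover have "orbit_pt ` {k \<in> S. f k = f k0} \<subseteq> gen_circle y_axis"
    by (auto simp: mem_gen_circle_y_axis orbit_pt_def)
  moreover have "infinite (orbit_pt ` {k \<in> S. f k = f k0})"
    using inf finite_imageD [OF _ inj_on_subset [OF inj_orbit_pt subset_UNIV]] by blast
  moreover have "y_axis \<noteq> 0"
    by (simp add: y_axis_def zero_prod_def)
  ultimately obtain \<mu> where "f k0 = \<mu> *\<^sub>R y_axis"
    using gen_circle_unique [OF c] by blast
  then show False
    using f [OF \<open>k0 \<in> S\<close>] circle_pullback_top_line_not_y_axis by auto
qed

lemma V_differ_on_open: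
  assumes "infinite S"
  shows "\<exists>k\<in>S. \<exists>l\<in>S. \<exists>U. open U \<and> U \<noteq> {} \<and> U \<subseteq> sym_diff (V k) (V l)"
proof -
  obtain l where "l \<in> S"
    using assms by (metis finite.emptyI ex_in_conv)
  obtain C where "finite C" "0 \<notin> C" "frontier (V l) \<subseteq> \<Union>(gen_circle ` C)"
    using frontier_V_subset_gen_circles by blast
  then obtain k p where k: "k \<in> S" "p \<in> orbit_arc k" "p \<notin> frontier (V l)"
    using orbit_arc_not_covered [OF assms] by blast
  then consider "p \<in> interior (V l)" | "p \<in> - closure (V l)"
    by (auto simp: frontier_def)
  then show ?thesis
  proof cases
    case 1
    then obtain U where "open U" "U \<noteq> {}" "U \<subseteq> interior (V l) - V k"
      using orbit_arc_two_sided(2) [OF k(2) open_interior] by blast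
    then show ?thesis
      using k(1) \<open>l \<in> S\<close> interior_subset by blast
  next
    case 2
    then obtain U where "open U" "U \<noteq> {}" "U \<subseteq> - closure (V l) \<inter> V k"
      using orbit_arc_two_sided(1) [OF k(2) open_Compl [OF closed_closure]] by blast
    then show ?thesis
      using k(1) \<open>l \<in> S\<close> closure_subset by blast
  qed
qed

corollary V_differ_on_open_same_value:
  assumes "finite (range f)"
  obtains k l U where "f k = f l" "open U" "U \<noteq> {}" "U \<subseteq> sym_diff (V k) (V l)"
proof -
  obtain k0 where "infinite {k. f k = f k0}"
    using pigeonhole_infinite [of UNIV f] assms by auto
  then show ?thesis
    using V_differ_on_open that by (metis (mono_tags, lifting) mem_Collect_eq)
qed

lemma not_finite_range: "\<not> finite_range \<alpha>"
proof
  assume "finite_range \<alpha>"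
  then obtain \<U> :: "pt set set" where "finite \<U>"
    and cover: "\<And>s. cyl \<alpha> s \<noteq> {} \<Longrightarrow> \<exists>U\<in>\<U>. let W = (Tmap \<alpha> ^^ length s) ` cyl \<alpha> s in
                     sym_diff W U \<in> null_sets lebesgue"
    unfolding finite_range_def by blast
  have "\<exists>U. U \<in> \<U> \<and> negligible (sym_diff (V k) U)" for k
  proof -
    have "cyl \<alpha> (orbit_word k) \<noteq> {}"
      using orbit_pt_in_V image_cyl_orbit_word [of k] by auto
    from cover [OF this] show ?thesis
      using image_cyl_orbit_word [of k]
      by (simp add: Let_def negligible_iff_null_sets orbit_word_def) blast
  qed
  then obtain g where g: "\<And>k. g k \<in> \<U> \<and> negligible (sym_diff (V k) (g k))"
    by metis
  then have "range g \<subseteq> \<U>"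
    by blast
  then have "finite (range g)"
    using \<open>finite \<U>\<close> by (rule finite_subset)
  then obtain k l U where "g k = g l" and U: "open U" "U \<noteq> {}" "U \<subseteq> sym_diff (V k) (V l)"
    by (rule V_differ_on_open_same_value)
  then have "U \<subseteq> sym_diff (V k) (g k) \<union> sym_diff (V l) (g l)"
    by blast
  moreover have "negligible (sym_diff (V k) (g k) \<union> sym_diff (V l) (g l))"
    using g negligible_Un by blast
  ultimately have "negligible U"
    by (rule negligible_subset [rotated])
  with U(1,2) show False
    using open_not_negligible by blast
qed

text \<open>The frontier of each \<open>V k\<close> lies in \<open>E\<close>, so every component of \<open>K - E\<close> lies inside or
  outside \<open>V k\<close>, and \<open>V k - E\<close> is a union of such components.\<close>

lemma V_minus_Eall_eq_Union_components:
  "V k - Eall \<alpha> = \<Union>{W \<in> components (Kdom \<alpha> - Eall \<alpha>). W \<subseteq> V k}"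
proof (intro equalityI subsetI)
  fix y assume y: "y \<in> V k - Eall \<alpha>"
  then obtain W where W: "W \<in> components (Kdom \<alpha> - Eall \<alpha>)" "y \<in> W"
    using V_subset_Kdom Union_components by blast
  have "W \<subseteq> V k"
  proof (rule ccontr)
    assume "\<not> W \<subseteq> V k"
    then have "W \<inter> frontier (V k) \<noteq> {}"
      using connected_Int_frontier [OF in_components_connected [OF W(1)]] y W(2) by blast
    then show False
      using in_components_subset [OF W(1)] frontier_V_subset_Eall by blast
  qed
  then show "y \<in> \<Union>{W \<in> components (Kdom \<alpha> - Eall \<alpha>). W \<subseteq> V k}"
    using W by blast
qed (use in_components_subset in blast)

lemma not_serendipitous: "\<not> serendipitous \<alpha>"
proof
  assume "serendipitous \<alpha>"
  then have "finite (components (Kdom \<alpha> - Eall \<alpha>))"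
    by (simp add: serendipitous_def)
  moreover have "range (\<lambda>k. {W \<in> components (Kdom \<alpha> - Eall \<alpha>). W \<subseteq> V k})
      \<subseteq> Pow (components (Kdom \<alpha> - Eall \<alpha>))"
    by auto
  ultimately have "finite (range (\<lambda>k. {W \<in> components (Kdom \<alpha> - Eall \<alpha>). W \<subseteq> V k}))"
    by (meson finite_Pow_iff finite_subset)
  then obtain k l U
    where "{W \<in> components (Kdom \<alpha> - Eall \<alpha>). W \<subseteq> V k} = {W \<in> components (Kdom \<alpha> - Eall \<alpha>). W \<subseteq> V l}"
      and U: "open U" "U \<noteq> {}" "U \<subseteq> sym_diff (V k) (V l)"
    by (rule V_differ_on_open_same_value)
  then have "V k - Eall \<alpha> = V l - Eall \<alpha>"
    by (simp only: V_minus_Eall_eq_Union_components)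
  with U(3) have "U \<subseteq> Eall \<alpha>"
    by blast
  then have "negligible U"
    using negligible_Eall by (rule negligible_subset [rotated])
  with U(1,2) show False
    using open_not_negligible by blast
qed

end

theorem corollary3p9:
  fixes \<alpha> :: real
  assumes "0 < \<alpha>" and "\<alpha> < 1"
    and "\<not> (\<exists>a b c :: int. (a, b, c) \<noteq> (0, 0, 0) \<and> of_int a * \<alpha>\<^sup>2 + of_int b * \<alpha> + of_int c = 0)"
  shows "\<not> serendipitous \<alpha> \<and> \<not> finite_range \<alpha>"
proof -
  interpret nonquadratic \<alpha>
    using assms by unfold_locales
  show ?thesis
    using not_serendipitous not_finite_range by blast
qed

end
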